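(* There is no binary self-orthogonal $[110,7,54]$ code.
   Context: A binary linear code $C$ is self-orthogonal if $C\subseteq C^\perp$. *)

theory Defs
  imports "HOL-Analysis.Analysis" "HOL-Library.Z2" "HOL-Library.Numeral_Type"
begin

definition bscale :: "bit \<Rightarrow> bit ^ 'n \<Rightarrow> bit ^ 'n" where
  "bscale a v = (\<chi> i. a * v $ i)"

lemma vector_space_bscale: "vector_space bscale"
  by unfold_locales (auto simp: bscale_def vec_eq_iff algebra_simps)

definition binary_linear_code :: "(bit ^ 'n) set \<Rightarrow> bool" where
  "binary_linear_code C \<longleftrightarrow> module.subspace bscale C"

definition code_dim :: "(bit ^ 'n) set \<Rightarrow> nat" where
  "code_dim C = vector_space.dim bscale C"

definition hamming_weight :: "bit ^ 'n \<Rightarrow> nat" where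
  "hamming_weight v = card {i. v $ i \<noteq> 0}"

definition hamming_dist :: "bit ^ 'n \<Rightarrow> bit ^ 'n \<Rightarrow> nat" where
  "hamming_dist x y = card {i. x $ i \<noteq> y $ i}"

text \<open>Minimum distance of a code (with at least two codewords).\<close>
definition min_dist :: "(bit ^ 'n) set \<Rightarrow> nat" where
  "min_dist C = Min {hamming_dist x y | x y. x \<in> C \<and> y \<in> C \<and> x \<noteq> y}"

definition bdot :: "bit ^ 'n \<Rightarrow> bit ^ 'n \<Rightarrow> bit" where
  "bdot x y = (\<Sum>i\<in>UNIV. x $ i * y $ i)"

definition dual_code :: "(bit ^ 'n) set \<Rightarrow> (bit ^ 'n) set" where
  "dual_code C = {y. \<forall>x\<in>C. bdot x y = 0}"

definition self_orthogonal :: "(bit ^ 'n) set \<Rightarrow> bool" where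
  "self_orthogonal C \<longleftrightarrow> C \<subseteq> dual_code C"

definition is_nkd_code :: "(bit ^ 'n) set \<Rightarrow> nat \<Rightarrow> nat \<Rightarrow> bool" where
  "is_nkd_code C k d \<longleftrightarrow> binary_linear_code C \<and> code_dim C = k \<and> min_dist C = d"

end

theory Submission
  imports Defs
begin

text \<open>Self-orthogonality makes every weight even and every pair of codewords meet in an even
number of positions, so weights add modulo 4. Hence the doubly-even codewords form a subcode of
index at most 2, with at least 64 words and minimum weight at least 56 (the next multiple of 4
after 54). Plotkin's averaging argument (each coordinate is nonzero in at most half
of the words of an additive subgroup) bounds their total weight by 55 per word, which forces at
most 56 words.\<close>

instance bit :: finite
proof
  have "(UNIV :: bit set) = {0, 1}"
    using bit_not_zero_iff by blast
  then show "finite (UNIV :: bit set)"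
    by (metis finite.emptyI finite.insertI)
qed

interpretation bv: vector_space bscale
  by (rule vector_space_bscale)

lemma bit_add_self [simp]: "(a :: bit) + a = 0"
  by (cases a) (auto simp flip: one_add_one)

lemma bit_vec_add_self [simp]: "(x :: bit ^ 'n) + x = 0"
  by (simp add: vec_eq_iff)

lemma of_nat_bit_eq_0_iff: "(of_nat n :: bit) = 0 \<longleftrightarrow> even n"
  by (induction n) auto

definition supp :: "bit ^ 'n \<Rightarrow> 'n set" where
  "supp x = {i. x $ i \<noteq> 0}"

lemma hamming_weight_eq_card_supp: "hamming_weight x = card (supp x)"
  by (simp add: hamming_weight_def supp_def)

lemma hamming_weight_add:
  "hamming_weight (x + y) + 2 * card (supp x \<inter> supp y) = hamming_weight x + hamming_weight y"
proof -
  have "supp (x + y) = (supp x \<union> supp y) - (supp x \<inter> supp y)"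
    by (auto simp: supp_def)
  moreover have "card (supp x \<union> supp y) + card (supp x \<inter> supp y) = card (supp x) + card (supp y)"
    using card_Un_Int[of "supp x" "supp y"] by simp
  moreover have "card (supp x \<union> supp y - supp x \<inter> supp y) =
      card (supp x \<union> supp y) - card (supp x \<inter> supp y)"
    by (rule card_Diff_subset) auto
  moreover have "card (supp x \<inter> supp y) \<le> card (supp x \<union> supp y)"
    by (rule card_mono) auto
  ultimately show ?thesis
    by (simp add: hamming_weight_eq_card_supp)
qed

lemma bdot_eq_of_nat_card_supp_Int: "bdot x y = of_nat (card (supp x \<inter> supp y))"
proof -
  have "bdot x y = (\<Sum>i\<in>UNIV. if i \<in> supp x \<inter> supp y then 1 else 0)"
    unfolding bdot_def supp_def
  proof (rule sum.cong)
    show "x $ i * y $ i = (if i \<in> {i. x $ i \<noteq> 0} \<inter> {i. y $ i \<noteq> 0} then 1 else 0)" for i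
      by (cases "x $ i"; cases "y $ i") auto
  qed simp
  then show ?thesis
    by (simp add: sum.If_cases Collect_conj_eq)
qed

lemma self_orthogonal_even_card_supp_Int:
  assumes "self_orthogonal C" "x \<in> C" "y \<in> C"
  shows "even (card (supp x \<inter> supp y))"
proof -
  have "bdot x y = 0"
    using assms by (auto simp: self_orthogonal_def dual_code_def)
  then show ?thesis
    by (simp add: bdot_eq_of_nat_card_supp_Int of_nat_bit_eq_0_iff)
qed

lemma hamming_weight_add_mod_4:
  assumes "even (card (supp x \<inter> supp y))"
  shows "hamming_weight (x + y) mod 4 = (hamming_weight x + hamming_weight y) mod 4"
proof -
  from assms obtain k where "card (supp x \<inter> supp y) = 2 * k"
    by (rule evenE)
  then have "hamming_weight (x + y) + 4 * k = hamming_weight x + hamming_weight y"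
    using hamming_weight_add[of x y] by simp
  then show ?thesis
    by (metis mod_mult_self2)
qed

lemma doubly_even_add_doubly_even:
  assumes "4 dvd hamming_weight x" "4 dvd hamming_weight y" "even (card (supp x \<inter> supp y))"
  shows "4 dvd hamming_weight (x + y)"
proof -
  have "4 dvd hamming_weight x + hamming_weight y"
    using assms(1,2) by simp
  then show ?thesis
    using hamming_weight_add_mod_4[OF assms(3)] by (metis dvd_eq_mod_eq_0)
qed

lemma singly_even_add_singly_even:
  assumes "even (card (supp x \<inter> supp y))"
    and "even (hamming_weight x)" "\<not> 4 dvd hamming_weight x"
    and "even (hamming_weight y)" "\<not> 4 dvd hamming_weight y"
  shows "4 dvd hamming_weight (x + y)"
proof -
  have "hamming_weight x mod 4 = 2"
    using assms(2,3) by presburger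
  moreover have "hamming_weight y mod 4 = 2"
    using assms(4,5) by presburger
  ultimately show ?thesis
    using hamming_weight_add_mod_4[OF assms(1)]
    by (metis dvd_eq_mod_eq_0 mod_add_eq add_2_eq_Suc' mod_self numeral_Bit0)
qed

text \<open>Translation by a fixed element outside P maps the elements outside P injectively into
those inside.\<close>

lemma card_filter_not_le_card_filter:
  fixes C :: "'a :: cancel_semigroup_add set"
  assumes "finite C"
    and "\<And>x y. x \<in> C \<Longrightarrow> y \<in> C \<Longrightarrow> \<not> P x \<Longrightarrow> \<not> P y \<Longrightarrow> x + y \<in> C \<and> P (x + y)"
  shows "card {x \<in> C. \<not> P x} \<le> card {x \<in> C. P x}"
proof (cases "{x \<in> C. \<not> P x} = {}")
  case False
  then obtain a where a: "a \<in> C" "\<not> P a" by blast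
  have "inj_on (\<lambda>x. x + a) {x \<in> C. \<not> P x}"
    by (rule inj_onI) simp
  moreover have "(\<lambda>x. x + a) ` {x \<in> C. \<not> P x} \<subseteq> {x \<in> C. P x}"
    using assms(2) a by auto
  ultimately show ?thesis
    by (rule card_inj_on_le) (simp add: assms(1))
next
  case True
  then show ?thesis by (metis card.empty le0)
qed

lemma card_le_twice_card_filter:
  fixes C :: "'a :: cancel_semigroup_add set"
  assumes "finite C"
    and "\<And>x y. x \<in> C \<Longrightarrow> y \<in> C \<Longrightarrow> \<not> P x \<Longrightarrow> \<not> P y \<Longrightarrow> x + y \<in> C \<and> P (x + y)"
  shows "card C \<le> 2 * card {x \<in> C. P x}"
proof -
  have "card C = card {x \<in> C. P x} + card {x \<in> C. \<not> P x}"
    using assms(1) by (subst card_Un_disjoint [symmetric]) (auto intro: arg_cong[where f = card])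
  then show ?thesis
    using card_filter_not_le_card_filter[OF assms] by simp
qed

definition doubly_even_subcode :: "(bit ^ 'n) set \<Rightarrow> (bit ^ 'n) set" where
  "doubly_even_subcode C = {x \<in> C. 4 dvd hamming_weight x}"

lemma doubly_even_subcode_add_closed:
  assumes "bv.subspace C" "self_orthogonal C"
    and "x \<in> doubly_even_subcode C" "y \<in> doubly_even_subcode C"
  shows "x + y \<in> doubly_even_subcode C"
proof -
  have "x \<in> C" "y \<in> C" "4 dvd hamming_weight x" "4 dvd hamming_weight y"
    using assms(3,4) by (simp_all add: doubly_even_subcode_def)
  then show ?thesis
    using doubly_even_add_doubly_even[of x y] self_orthogonal_even_card_supp_Int[OF assms(2)]
      bv.subspace_add[OF assms(1)]
    by (simp add: doubly_even_subcode_def)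
qed

lemma card_le_twice_card_doubly_even_subcode:
  assumes "bv.subspace C" "self_orthogonal C"
  shows "card C \<le> 2 * card (doubly_even_subcode C)"
  unfolding doubly_even_subcode_def
proof (rule card_le_twice_card_filter)
  have even_weight: "even (hamming_weight x)" if "x \<in> C" for x
    using self_orthogonal_even_card_supp_Int[OF assms(2) that that]
    by (simp add: hamming_weight_eq_card_supp)
  fix x y
  assume "x \<in> C" "y \<in> C" "\<not> 4 dvd hamming_weight x" "\<not> 4 dvd hamming_weight y"
  then show "x + y \<in> C \<and> 4 dvd hamming_weight (x + y)"
    using singly_even_add_singly_even[of x y] self_orthogonal_even_card_supp_Int[OF assms(2)] even_weight
      bv.subspace_add[OF assms(1)]
    by simp
qed simp

lemma twice_card_coordinate_nonzero_le:
  fixes C :: "(bit ^ 'n) set"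
  assumes "\<And>x y. x \<in> C \<Longrightarrow> y \<in> C \<Longrightarrow> x + y \<in> C"
  shows "2 * card {x \<in> C. x $ i \<noteq> 0} \<le> card C"
proof -
  have "card {x \<in> C. \<not> x $ i = 0} \<le> card {x \<in> C. x $ i = 0}"
    by (rule card_filter_not_le_card_filter) (simp_all add: assms)
  moreover have "card C = card {x \<in> C. x $ i = 0} + card {x \<in> C. x $ i \<noteq> 0}"
    by (subst card_Un_disjoint [symmetric]) (auto intro: arg_cong[where f = card])
  ultimately show ?thesis by simp
qed

lemma twice_sum_hamming_weight_le:
  fixes C :: "(bit ^ 'n) set"
  assumes "\<And>x y. x \<in> C \<Longrightarrow> y \<in> C \<Longrightarrow> x + y \<in> C"
  shows "2 * (\<Sum>x\<in>C. hamming_weight x) \<le> CARD('n) * card C"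
proof -
  have "(\<Sum>x\<in>C. hamming_weight x) = (\<Sum>x\<in>C. \<Sum>i\<in>UNIV. if x $ i \<noteq> 0 then 1 else 0)"
    by (simp add: hamming_weight_def sum.If_cases)
  also have "\<dots> = (\<Sum>i\<in>UNIV. card {x \<in> C. x $ i \<noteq> 0})"
    by (subst sum.swap) (simp add: sum.If_cases Int_def)
  finally have "2 * (\<Sum>x\<in>C. hamming_weight x) = (\<Sum>i\<in>UNIV. 2 * card {x \<in> C. x $ i \<noteq> 0})"
    by (simp add: sum_distrib_left)
  also have "\<dots> \<le> (\<Sum>i\<in>(UNIV :: 'n set). card C)"
    by (intro sum_mono twice_card_coordinate_nonzero_le assms)
  finally show ?thesis by simp
qed

lemma plotkin_bound:
  fixes D :: "(bit ^ 'n) set"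
  assumes add_closed: "\<And>x y. x \<in> D \<Longrightarrow> y \<in> D \<Longrightarrow> x + y \<in> D"
    and weight: "\<And>x. x \<in> D \<Longrightarrow> x \<noteq> 0 \<Longrightarrow> w \<le> hamming_weight x"
  shows "card D * (2 * w - CARD('n)) \<le> 2 * w"
proof (cases "D = {}")
  case False
  then have "0 \<in> D"
    using add_closed by (metis bit_vec_add_self ex_in_conv)
  then have card_D: "card (D - {0}) + 1 = card D"
    using False by (simp add: card_Diff_singleton card_gt_0_iff)
  have "w * card (D - {0}) \<le> (\<Sum>x\<in>D - {0}. hamming_weight x)"
    using sum_mono[of "D - {0}" "\<lambda>_. w" hamming_weight] weight by (simp add: mult.commute)
  also have "\<dots> \<le> (\<Sum>x\<in>D. hamming_weight x)"
    by (rule sum_mono2) auto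
  finally have lower: "w * card (D - {0}) \<le> (\<Sum>x\<in>D. hamming_weight x)" .
  have "card D * (2 * w) = 2 * (w * card (D - {0})) + 2 * w"
    by (simp add: algebra_simps flip: card_D)
  then have "card D * (2 * w) \<le> card D * CARD('n) + 2 * w"
    using lower twice_sum_hamming_weight_le[OF add_closed] by (simp add: mult.commute)
  then show ?thesis
    by (simp add: diff_mult_distrib2)
qed simp

text \<open>Over GF(2) the subsets of a basis have pairwise distinct sums.\<close>

lemma two_power_dim_le_card_subspace:
  fixes C :: "(bit ^ 'n) set"
  assumes "bv.subspace C"
  shows "2 ^ bv.dim C \<le> card C"
proof -
  obtain B where B: "B \<subseteq> C" "bv.independent B" "card B = bv.dim C"
    by (rule bv.basis_exists)
  have "inj_on \<Sum> (Pow B)"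
  proof (rule inj_onI)
    fix S T assume "S \<in> Pow B" "T \<in> Pow B" "\<Sum>S = \<Sum>T"
    let ?ind = "\<lambda>S v. if v \<in> S then 1 else 0 :: bit"
    have "?ind S = ?ind T"
      by (rule bv.unique_representation[OF B(2)]) (use \<open>S \<in> Pow B\<close> \<open>T \<in> Pow B\<close> \<open>\<Sum>S = \<Sum>T\<close>
            in \<open>auto split: if_splits\<close>)
    then show "S = T"
      by (auto simp: fun_eq_iff split: if_splits)
  qed
  moreover have "\<Sum> ` Pow B \<subseteq> C"
    using B(1) assms by (auto intro!: bv.subspace_sum)
  ultimately have "card (Pow B) \<le> card C"
    by (rule card_inj_on_le) simp
  then show ?thesis
    using B(3) by (simp add: card_Pow)
qed

lemma min_dist_le_hamming_dist:
  fixes C :: "(bit ^ 'n) set"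
  assumes "x \<in> C" "y \<in> C" "x \<noteq> y"
  shows "min_dist C \<le> hamming_dist x y"
proof -
  have "{hamming_dist x y | x y. x \<in> C \<and> y \<in> C \<and> x \<noteq> y} \<subseteq> {..CARD('n)}"
    by (auto simp: hamming_dist_def card_mono[OF finite subset_UNIV])
  then show ?thesis
    unfolding min_dist_def using assms by (blast intro: Min_le finite_subset)
qed

lemma min_dist_le_hamming_weight:
  assumes "binary_linear_code C" "x \<in> C" "x \<noteq> 0"
  shows "min_dist C \<le> hamming_weight x"
proof -
  have "0 \<in> C"
    using assms(1) by (simp add: binary_linear_code_def bv.subspace_0)
  then show ?thesis
    using min_dist_le_hamming_dist[OF assms(2) _ assms(3)]
    by (simp add: hamming_dist_def hamming_weight_def)
qed

theorem proposition6p5: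
  shows "\<not> (\<exists>C :: (bit ^ 110) set. is_nkd_code C 7 54 \<and> self_orthogonal C)"
proof
  assume "\<exists>C :: (bit ^ 110) set. is_nkd_code C 7 54 \<and> self_orthogonal C"
  then obtain C :: "(bit ^ 110) set"
    where code: "is_nkd_code C 7 54" and self_orth: "self_orthogonal C"
    by blast
  then have lin: "binary_linear_code C" and sub: "bv.subspace C"
    by (simp_all add: is_nkd_code_def binary_linear_code_def)
  let ?D = "doubly_even_subcode C"
  have "128 \<le> card C"
    using two_power_dim_le_card_subspace[OF sub] code by (simp add: is_nkd_code_def code_dim_def)
  also have "card C \<le> 2 * card ?D"
    using sub self_orth by (rule card_le_twice_card_doubly_even_subcode)
  finally have "64 \<le> card ?D" by simp
  moreover have "card ?D * (2 * 56 - CARD(110)) \<le> 2 * 56"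
  proof (rule plotkin_bound)
    show "x + y \<in> ?D" if "x \<in> ?D" "y \<in> ?D" for x y
      using sub self_orth that by (rule doubly_even_subcode_add_closed)
    show "56 \<le> hamming_weight x" if "x \<in> ?D" "x \<noteq> 0" for x
    proof -
      have "54 \<le> hamming_weight x" "4 dvd hamming_weight x"
        using min_dist_le_hamming_weight[OF lin] code that
        by (auto simp: doubly_even_subcode_def is_nkd_code_def)
      then show ?thesis by presburger
    qed
  qed
  ultimately show False by simp
qed

end
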